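(* Let $\mathcal{X}$ be a connected $n$-premaniplex with base flag $x_0$ and $N=\operatorname{Stab}_{\mathcal{C}^n}(x_0)$, and let $(\mathcal{Y},\eta)$ be an $(n,m)$-voltage operator that preserves connectivity, with base flag $y_0$ of $\mathcal{Y}$, $L=\operatorname{Stab}_{\mathcal{C}^m}(y_0)$ and $\zeta:L\to\mathcal{C}^n$, $\zeta(\omega)=\eta(W_\omega(y_0))$. For $\upsilon\in\mathcal{C}^m$ let $\mathcal{Z}_\upsilon=\mathcal{C}^n/\zeta(L\cap L^\upsilon)$. If for every $\upsilon\in\mathcal{C}^m\setminus L$ the premaniplex $\mathcal{X}$ does not cover $\mathcal{Z}_\upsilon$, then every automorphism $\gamma$ of $\mathcal{X}\rtimes_\eta\mathcal{Y}$ is induced by an automorphism of $\mathcal{X}$, i.e. there is $\alpha\in\operatorname{Aut}(\mathcal{X})$ with $(x,y)\gamma=(x\alpha,y)$ for all $(x,y)$.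
   Context: An $n$-premaniplex is an edge-coloured graph (semi-edges and parallel edges allowed) with colours $\{0,\dots,n-1\}$ such that every vertex (flag) is the start of exactly one dart of each colour, and for $|i-j|\ge2$ alternating $i,j$-paths of length 4 are closed; $x^i$ is the $i$-adjacent flag of $x$. $\mathcal{C}^n=\langle r_0,\dots,r_{n-1}\mid r_i^2,\ (r_ir_j)^2\ (|i-j|\ge2)\rangle$ acts on the left on flags by $r_ix=x^i$; automorphisms act on the right. A covering is a surjective map of flags preserving all adjacencies. $L^\upsilon=\upsilon^{-1}L\upsilon$. For a subgroup $K\le\mathcal{C}^n$, $\mathcal{C}^n/K$ has flags the left cosets $\omega K$ with $(\omega K)^i=r_i\omega K$. For a flag $y$ of an $m$-premaniplex $\mathcal{Y}$ and $\omega\in\mathcal{C}^m$, $W_\omega(y)$ is the homotopy class of paths from $y$ whose colour sequence $i_1,\dots,i_k$ satisfies $r_{i_k}\cdots r_{i_1}=\omega$; these form the fundamental groupoid $\Pi(\mathcal{Y})$. A voltage assignment $\eta:\Pi(\mathcal{Y})\to\mathcal{C}^n$ satisfies $\eta(W_1W_2)=\eta(W_2)\eta(W_1)$; $(\mathcal{Y},\eta)$ is an $(n,m)$-voltage operator. $\mathcal{X}\rtimes_\eta\mathcal{Y}$ has flags $\mathcal{X}\times\mathcal{Y}$ and $(x,y)^i=(\eta(W_{r_i}(y))x,r_iy)$, $i\in\{0,\dots,m-1\}$. The operator preserves connectivity if $\mathcal{X}\rtimes_\eta\mathcal{Y}$ is connected whenever $\mathcal{X}$ is. Standing convention: $\mathcal{Y}$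 has a spanning tree all of whose darts have trivial voltage. *)

theory Defs
  imports Main
begin

text \<open>Words over the generators. A word [a1,...,ak] represents the element
  r_a1 r_a2 ... r_ak of the group C^n; its inverse is represented by the reversed word.\<close>

type_synonym word = "nat list"

definition words :: "nat \<Rightarrow> word set" where
  "words n = {w. set w \<subseteq> {..<n}}"

text \<open>Equality in C^n = < r_0..r_(n-1) | r_i^2, (r_i r_j)^2 for |i-j| >= 2 >.\<close>
inductive cox_eq :: "nat \<Rightarrow> word \<Rightarrow> word \<Rightarrow> bool" for n :: nat where
  cox_refl: "set w \<subseteq> {..<n} \<Longrightarrow> cox_eq n w w"
| cox_sym: "cox_eq n u v \<Longrightarrow> cox_eq n v u"
| cox_trans: "cox_eq n u v \<Longrightarrow> cox_eq n v w \<Longrightarrow> cox_eq n u w"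
| cox_del2: "set u \<subseteq> {..<n} \<Longrightarrow> set v \<subseteq> {..<n} \<Longrightarrow> i < n \<Longrightarrow>
      cox_eq n (u @ [i, i] @ v) (u @ v)"
| cox_del4: "set u \<subseteq> {..<n} \<Longrightarrow> set v \<subseteq> {..<n} \<Longrightarrow> i < n \<Longrightarrow> j < n \<Longrightarrow>
      i + 2 \<le> j \<or> j + 2 \<le> i \<Longrightarrow> cox_eq n (u @ [i, j, i, j] @ v) (u @ v)"

text \<open>Left action of a word on flags: (r_a1 ... r_ak) x = r_a1 (... (r_ak x)), r_i x = x^i.\<close>
definition act :: "(nat \<Rightarrow> 'a \<Rightarrow> 'a) \<Rightarrow> word \<Rightarrow> 'a \<Rightarrow> 'a" where
  "act adj w x = foldr adj w x"

definition premaniplex :: "nat \<Rightarrow> 'a set \<Rightarrow> (nat \<Rightarrow> 'a \<Rightarrow> 'a) \<Rightarrow> bool" where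
  "premaniplex n F adj \<longleftrightarrow>
     (\<forall>i<n. \<forall>x\<in>F. adj i x \<in> F \<and> adj i (adj i x) = x) \<and>
     (\<forall>i<n. \<forall>j<n. i + 2 \<le> j \<or> j + 2 \<le> i \<longrightarrow>
        (\<forall>x\<in>F. adj j (adj i (adj j (adj i x))) = x))"

definition connected_pm :: "nat \<Rightarrow> 'a set \<Rightarrow> (nat \<Rightarrow> 'a \<Rightarrow> 'a) \<Rightarrow> bool" where
  "connected_pm n F adj \<longleftrightarrow> (\<forall>x\<in>F. \<forall>y\<in>F. \<exists>w\<in>words n. act adj w x = y)"

definition stab :: "nat \<Rightarrow> (nat \<Rightarrow> 'a \<Rightarrow> 'a) \<Rightarrow> 'a \<Rightarrow> word set" where
  "stab n adj x = {w \<in> words n. act adj w x = x}"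

text \<open>Automorphisms (acting on the right): (x^i) alpha = (x alpha)^i.\<close>
definition automorphism :: "nat \<Rightarrow> 'a set \<Rightarrow> (nat \<Rightarrow> 'a \<Rightarrow> 'a) \<Rightarrow> ('a \<Rightarrow> 'a) \<Rightarrow> bool" where
  "automorphism n F adj \<alpha> \<longleftrightarrow> bij_betw \<alpha> F F \<and> (\<forall>i<n. \<forall>x\<in>F. \<alpha> (adj i x) = adj i (\<alpha> x))"

definition covers :: "nat \<Rightarrow> 'a set \<Rightarrow> (nat \<Rightarrow> 'a \<Rightarrow> 'a) \<Rightarrow> 'b set \<Rightarrow> (nat \<Rightarrow> 'b \<Rightarrow> 'b) \<Rightarrow> bool" where
  "covers n F adj G adj' \<longleftrightarrow>
     (\<exists>f. f ` F = G \<and> (\<forall>i<n. \<forall>x\<in>F. f (adj i x) = adj' i (f x)))"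

text \<open>The premaniplex C^n/K: flags are the left cosets wK, with (wK)^i = r_i w K.\<close>
definition coset :: "nat \<Rightarrow> word set \<Rightarrow> word \<Rightarrow> word set" where
  "coset n K w = {w' \<in> words n. \<exists>k\<in>K. cox_eq n w' (w @ k)}"

definition quot_flags :: "nat \<Rightarrow> word set \<Rightarrow> word set set" where
  "quot_flags n K = coset n K ` words n"

definition quot_adj :: "nat \<Rightarrow> nat \<Rightarrow> word set \<Rightarrow> word set" where
  "quot_adj n i C = {w' \<in> words n. \<exists>w\<in>C. cox_eq n w' (i # w)}"

text \<open>Voltage assignment on the fundamental groupoid: the homotopy class W_omega(y) is
  identified with the pair (y, omega), omega in C^m; eta y omega = eta(W_omega(y)) in C^n.\<close>
definition voltage :: "nat \<Rightarrow> nat \<Rightarrow> 'b set \<Rightarrow> (nat \<Rightarrow> 'b \<Rightarrow> 'b) \<Rightarrow> ('b \<Rightarrow> word \<Rightarrow> word) \<Rightarrow> bool" where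
  "voltage n m FY adjY eta \<longleftrightarrow>
     (\<forall>y\<in>FY. \<forall>\<omega>\<in>words m. eta y \<omega> \<in> words n) \<and>
     (\<forall>y\<in>FY. \<forall>\<omega> \<omega>'. cox_eq m \<omega> \<omega>' \<longrightarrow> cox_eq n (eta y \<omega>) (eta y \<omega>')) \<and>
     (\<forall>y\<in>FY. \<forall>\<omega>\<in>words m. \<forall>\<omega>'\<in>words m.
        cox_eq n (eta y (\<omega>' @ \<omega>)) (eta (act adjY \<omega> y) \<omega>' @ eta y \<omega>))"

definition voltage_operator :: "nat \<Rightarrow> nat \<Rightarrow> 'b set \<Rightarrow> (nat \<Rightarrow> 'b \<Rightarrow> 'b) \<Rightarrow> ('b \<Rightarrow> word \<Rightarrow> word) \<Rightarrow> bool" where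
  "voltage_operator n m FY adjY eta \<longleftrightarrow> premaniplex m FY adjY \<and> voltage n m FY adjY eta"

definition prod_adj :: "(nat \<Rightarrow> 'a \<Rightarrow> 'a) \<Rightarrow> (nat \<Rightarrow> 'b \<Rightarrow> 'b) \<Rightarrow> ('b \<Rightarrow> word \<Rightarrow> word)
    \<Rightarrow> nat \<Rightarrow> 'a \<times> 'b \<Rightarrow> 'a \<times> 'b" where
  "prod_adj adjX adjY eta i p = (act adjX (eta (snd p) [i]) (fst p), adjY i (snd p))"

text \<open>Every connected n-premaniplex is countable (each flag is
  w x0 for a word w), hence isomorphic to one whose flags are natural numbers; so quantifying
  over premaniplexes with flags in nat covers all connected premaniplexes up to isomorphism.\<close>
definition preserves_connectivity :: "nat \<Rightarrow> nat \<Rightarrow> 'b set \<Rightarrow> (nat \<Rightarrow> 'b \<Rightarrow> 'b) \<Rightarrow> ('b \<Rightarrow> word \<Rightarrow> word) \<Rightarrow> bool" where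
  "preserves_connectivity n m FY adjY eta \<longleftrightarrow>
     (\<forall>(FX :: nat set) adjX. premaniplex n FX adjX \<and> connected_pm n FX adjX \<longrightarrow>
        connected_pm m (FX \<times> FY) (prod_adj adjX adjY eta))"

text \<open>Spanning trees. A set T of darts (y,i) (dart of colour i starting at y), closed under
  reversal; a T-path from y is given by its colour sequence in path order.\<close>
fun tpath :: "(nat \<Rightarrow> 'b \<Rightarrow> 'b) \<Rightarrow> ('b \<times> nat) set \<Rightarrow> 'b \<Rightarrow> nat list \<Rightarrow> bool" where
  "tpath adj T y [] = True"
| "tpath adj T y (i # is) = ((y, i) \<in> T \<and> tpath adj T (adj i y) is)"

definition path_end :: "(nat \<Rightarrow> 'b \<Rightarrow> 'b) \<Rightarrow> 'b \<Rightarrow> nat list \<Rightarrow> 'b" where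
  "path_end adj y is = foldl (\<lambda>z i. adj i z) y is"

definition reduced :: "nat list \<Rightarrow> bool" where
  "reduced is \<longleftrightarrow> (\<forall>j. Suc j < length is \<longrightarrow> is ! j \<noteq> is ! Suc j)"

text \<open>T spans a tree: it connects all flags and contains no cycle (no nontrivial closed
  non-backtracking walk; semi-edges and pairs of parallel edges count as cycles).\<close>
definition spanning_tree :: "nat \<Rightarrow> 'b set \<Rightarrow> (nat \<Rightarrow> 'b \<Rightarrow> 'b) \<Rightarrow> ('b \<times> nat) set \<Rightarrow> bool" where
  "spanning_tree m F adj T \<longleftrightarrow>
     T \<subseteq> F \<times> {..<m} \<and>
     (\<forall>(y, i)\<in>T. (adj i y, i) \<in> T) \<and>
     (\<forall>y\<in>F. \<forall>z\<in>F. \<exists>is. tpath adj T y is \<and> path_end adj y is = z) \<and>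
     (\<forall>y\<in>F. \<forall>is. is \<noteq> [] \<and> reduced is \<and> tpath adj T y is \<longrightarrow> path_end adj y is \<noteq> y)"

definition trivial_tree_convention :: "nat \<Rightarrow> nat \<Rightarrow> 'b set \<Rightarrow> (nat \<Rightarrow> 'b \<Rightarrow> 'b) \<Rightarrow> ('b \<Rightarrow> word \<Rightarrow> word) \<Rightarrow> bool" where
  "trivial_tree_convention n m FY adjY eta \<longleftrightarrow>
     (\<exists>T. spanning_tree m FY adjY T \<and> (\<forall>(y, i)\<in>T. cox_eq n (eta y [i]) []))"

end

theory Submission
  imports Defs "HOL-Library.Countable"
begin

(* Preservation of connectivity, applied to the universal premaniplex C^n, shows that any two
   flags of Y are joined by paths of every prescribed voltage.  An automorphism gamma of
   X \<rtimes> Y commutes with the action of C^m.  Suppose gamma (x, y0) = (x', y1) and write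
   y1 = upsilon^-1 y0.  Every s in Stab(x) is the voltage zeta(lambda) of some lambda in L, and
   lambda then also fixes (x', y1), so lambda lies in L \<inter> Stab(y1) = L \<inter> L^upsilon.  Hence
   Stab(x) \<le> zeta(L \<inter> L^upsilon), i.e. X covers Z_upsilon, which forces upsilon in L, i.e.
   y1 = y0.  So gamma preserves the fibre over y0 and restricts there to an automorphism alpha
   of X; as every flag (x, y) is reached from that fibre by the action of C^m, gamma is
   alpha \<times> id. *)

lemma words_Nil [simp]: "[] \<in> words n"
  by (simp add: words_def)

lemma words_Cons [simp]: "i # w \<in> words n \<longleftrightarrow> i < n \<and> w \<in> words n"
  by (auto simp: words_def)

lemma words_append [simp]: "u @ v \<in> words n \<longleftrightarrow> u \<in> words n \<and> v \<in> words n"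
  by (auto simp: words_def)

lemma words_rev [simp]: "rev w \<in> words n \<longleftrightarrow> w \<in> words n"
  by (simp add: words_def)

declare cox_eq.cox_trans [trans]

lemma cox_eq_words: "cox_eq n u v \<Longrightarrow> u \<in> words n \<and> v \<in> words n"
  by (induction rule: cox_eq.induct) (auto simp: words_def)

lemma cox_eq_refl: "w \<in> words n \<Longrightarrow> cox_eq n w w"
  by (rule cox_eq.cox_refl) (simp add: words_def)

lemma cox_eq_append_cong:
  "cox_eq n u v \<Longrightarrow> a \<in> words n \<Longrightarrow> b \<in> words n \<Longrightarrow> cox_eq n (a @ u @ b) (a @ v @ b)"
proof (induction rule: cox_eq.induct)
  case (cox_refl w)
  then show ?case by (simp add: cox_eq_refl words_def)
next
  case (cox_sym u v)
  then show ?case by (blast intro: cox_eq.cox_sym)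
next
  case (cox_trans u v w)
  then show ?case by (blast intro: cox_eq.cox_trans)
next
  case (cox_del2 u v i)
  then show ?case using cox_eq.cox_del2[of "a @ u" n "v @ b" i] by (simp add: words_def)
next
  case (cox_del4 u v i j)
  then show ?case using cox_eq.cox_del4[of "a @ u" n "v @ b" i j] by (simp add: words_def)
qed

lemma cox_eq_append_left: "cox_eq n u v \<Longrightarrow> a \<in> words n \<Longrightarrow> cox_eq n (a @ u) (a @ v)"
  using cox_eq_append_cong[of n u v a "[]"] by simp

lemma cox_eq_append_right: "cox_eq n u v \<Longrightarrow> b \<in> words n \<Longrightarrow> cox_eq n (u @ b) (v @ b)"
  using cox_eq_append_cong[of n u v "[]" b] by simp

lemma cox_eq_rev_append: "w \<in> words n \<Longrightarrow> cox_eq n (rev w @ w) []"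
proof (induction w)
  case Nil
  then show ?case by (simp add: cox_eq_refl)
next
  case (Cons i w)
  then have "cox_eq n (rev w @ [i, i] @ w) (rev w @ w)"
    by (intro cox_eq.cox_del2) (auto simp: words_def)
  with Cons show ?case by (auto intro: cox_eq.cox_trans)
qed

lemma cox_eq_append_rev: "w \<in> words n \<Longrightarrow> cox_eq n (w @ rev w) []"
  using cox_eq_rev_append[of "rev w" n] by simp

lemma act_Nil [simp]: "act adj [] x = x"
  by (simp add: act_def)

lemma act_Cons [simp]: "act adj (i # w) x = adj i (act adj w x)"
  by (simp add: act_def)

lemma act_append: "act adj (u @ v) x = act adj u (act adj v x)"
  by (simp add: act_def)

lemma act_in_flags:
  assumes "\<And>i x. i < n \<Longrightarrow> x \<in> F \<Longrightarrow> adj i x \<in> F" and "x \<in> F"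
  shows "w \<in> words n \<Longrightarrow> act adj w x \<in> F"
  by (induction w) (simp_all add: assms)

lemma premaniplex_adj_in_flags: "premaniplex n F adj \<Longrightarrow> i < n \<Longrightarrow> x \<in> F \<Longrightarrow> adj i x \<in> F"
  by (simp add: premaniplex_def)

lemma premaniplex_act_in_flags:
  "premaniplex n F adj \<Longrightarrow> x \<in> F \<Longrightarrow> w \<in> words n \<Longrightarrow> act adj w x \<in> F"
  by (rule act_in_flags) (auto intro: premaniplex_adj_in_flags)

lemma premaniplex_act_cox_eq:
  "cox_eq n u v \<Longrightarrow> premaniplex n F adj \<Longrightarrow> x \<in> F \<Longrightarrow> act adj u x = act adj v x"
proof (induction rule: cox_eq.induct)
  case (cox_del2 u v i)
  then have "act adj v x \<in> F" by (simp add: premaniplex_act_in_flags words_def)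
  with cox_del2 show ?case by (simp add: act_append premaniplex_def)
next
  case (cox_del4 u v i j)
  then have "act adj v x \<in> F" by (simp add: premaniplex_act_in_flags words_def)
  with cox_del4 show ?case unfolding premaniplex_def by (simp add: act_append) metis
qed auto

lemma premaniplex_act_rev_act:
  "premaniplex n F adj \<Longrightarrow> x \<in> F \<Longrightarrow> w \<in> words n \<Longrightarrow> act adj (rev w) (act adj w x) = x"
  using premaniplex_act_cox_eq[OF cox_eq_rev_append, of w n F adj x] by (simp add: act_append)

lemma premaniplex_act_act_rev:
  "premaniplex n F adj \<Longrightarrow> x \<in> F \<Longrightarrow> w \<in> words n \<Longrightarrow> act adj w (act adj (rev w) x) = x"
  using premaniplex_act_rev_act[of n F adj x "rev w"] by simp

lemma stab_append: "u \<in> stab n adj x \<Longrightarrow> v \<in> stab n adj x \<Longrightarrow> u @ v \<in> stab n adj x"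
  by (simp add: stab_def act_append)

lemma rev_mem_stab_iff:
  assumes "premaniplex n F adj" "x \<in> F" "w \<in> words n"
  shows "rev w \<in> stab n adj x \<longleftrightarrow> act adj w x = x"
  using premaniplex_act_act_rev[OF assms] premaniplex_act_rev_act[OF assms] assms(3)
  unfolding stab_def by force

lemma conj_mem_stab_iff:
  assumes F: "premaniplex n F adj" and x: "x \<in> F" and v: "v \<in> words n" and w: "w \<in> words n"
  shows "rev v @ w @ v \<in> stab n adj x \<longleftrightarrow> w \<in> stab n adj (act adj v x)"
proof -
  define z where "z = act adj v x"
  have z: "z \<in> F" and wz: "act adj w z \<in> F"
    using F x v w by (simp_all add: premaniplex_act_in_flags z_def)
  have "rev v @ w @ v \<in> stab n adj x \<longleftrightarrow> act adj (rev v) (act adj w z) = act adj (rev v) z"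
    using v w premaniplex_act_rev_act[OF F x v] by (simp add: stab_def act_append z_def)
  also have "\<dots> \<longleftrightarrow> act adj w z = z"
    by (metis premaniplex_act_act_rev[OF F wz v] premaniplex_act_act_rev[OF F z v])
  finally show ?thesis using w by (simp add: stab_def z_def)
qed

lemma automorphism_act:
  assumes closed: "\<And>i x. i < n \<Longrightarrow> x \<in> F \<Longrightarrow> adj i x \<in> F"
    and g: "automorphism n F adj g" and x: "x \<in> F"
  shows "w \<in> words n \<Longrightarrow> g (act adj w x) = act adj w (g x)"
proof (induction w)
  case (Cons i w)
  then have "act adj w x \<in> F" by (simp add: act_in_flags[OF closed x])
  with Cons g show ?case by (simp add: automorphism_def)
qed simp

lemma voltage_in_words:
  "voltage n m FY adjY eta \<Longrightarrow> y \<in> FY \<Longrightarrow> \<omega> \<in> words m \<Longrightarrow> eta y \<omega> \<in> words n"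
  by (simp add: voltage_def)

lemma voltage_append:
  "voltage n m FY adjY eta \<Longrightarrow> y \<in> FY \<Longrightarrow> \<omega> \<in> words m \<Longrightarrow> \<omega>' \<in> words m \<Longrightarrow>
    cox_eq n (eta y (\<omega>' @ \<omega>)) (eta (act adjY \<omega> y) \<omega>' @ eta y \<omega>)"
  by (simp add: voltage_def)

lemma voltage_Nil:
  assumes V: "voltage n m FY adjY eta" and y: "y \<in> FY"
  shows "cox_eq n (eta y []) []"
proof -
  define e where "e = eta y []"
  have e: "e \<in> words n"
    using voltage_in_words[OF V y] by (simp add: e_def)
  have "cox_eq n e (e @ e)"
    using voltage_append[OF V y, of "[]" "[]"] by (simp add: e_def)
  then have "cox_eq n (rev e @ e) (rev e @ e @ e)"
    using cox_eq_append_left e by simp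
  moreover have "cox_eq n (rev e @ e @ e) e"
    using cox_eq_append_right[OF cox_eq_rev_append[OF e] e] by simp
  ultimately have "cox_eq n (rev e @ e) e"
    by (rule cox_eq.cox_trans)
  then show ?thesis
    using cox_eq_rev_append[OF e] unfolding e_def by (blast intro: cox_eq.cox_sym cox_eq.cox_trans)
qed

lemma voltage_stab_append:
  assumes V: "voltage n m FY adjY eta" and y: "y \<in> FY"
    and l: "l \<in> stab m adjY y" and l': "l' \<in> stab m adjY y"
  shows "cox_eq n (eta y l @ eta y l') (eta y (l @ l'))"
  using voltage_append[OF V y, of l' l] l l' by (simp add: stab_def cox_eq.cox_sym)

lemma act_prod_adj:
  assumes X: "premaniplex n FX adjX" and V: "voltage n m FY adjY eta"
    and x: "x \<in> FX" and y: "y \<in> FY"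
  shows "\<omega> \<in> words m \<Longrightarrow>
    act (prod_adj adjX adjY eta) \<omega> (x, y) = (act adjX (eta y \<omega>) x, act adjY \<omega> y)"
proof (induction \<omega>)
  case Nil
  show ?case using premaniplex_act_cox_eq[OF voltage_Nil[OF V y] X x] by simp
next
  case (Cons i \<omega>)
  then have "act adjX (eta y ([i] @ \<omega>)) x = act adjX (eta (act adjY \<omega> y) [i] @ eta y \<omega>) x"
    using premaniplex_act_cox_eq[OF voltage_append[OF V y, of \<omega> "[i]"] X x] by simp
  with Cons show ?case by (simp add: prod_adj_def act_append)
qed

lemma prod_adj_in_flags:
  assumes "premaniplex n FX adjX" "premaniplex m FY adjY" "voltage n m FY adjY eta"
    and "i < m" "p \<in> FX \<times> FY"
  shows "prod_adj adjX adjY eta i p \<in> FX \<times> FY"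
  using assms by (auto simp: prod_adj_def premaniplex_adj_in_flags premaniplex_act_in_flags
      voltage_in_words)

text \<open>The universal premaniplex \<open>\<C>\<^sup>n\<close>, whose flags are the elements of \<open>\<C>\<^sup>n\<close>. As
  \<^const>\<open>preserves_connectivity\<close> only speaks about premaniplexes with flags in \<^typ>\<open>nat\<close>,
  an element is encoded by the code of a chosen representative word.\<close>

definition cox_rep :: "nat \<Rightarrow> word \<Rightarrow> word" where
  "cox_rep n w = (SOME v. cox_eq n v w)"

definition univ_flag :: "nat \<Rightarrow> word \<Rightarrow> nat" where
  "univ_flag n w = to_nat (cox_rep n w)"

definition univ_flags :: "nat \<Rightarrow> nat set" where
  "univ_flags n = univ_flag n ` words n"

definition univ_adj :: "nat \<Rightarrow> nat \<Rightarrow> nat \<Rightarrow> nat" where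
  "univ_adj n i k = univ_flag n (i # from_nat k)"

lemma cox_rep_cox_eq: "w \<in> words n \<Longrightarrow> cox_eq n (cox_rep n w) w"
  unfolding cox_rep_def by (rule someI) (rule cox_eq_refl)

lemma cox_rep_eq_iff:
  assumes "u \<in> words n" "v \<in> words n"
  shows "cox_rep n u = cox_rep n v \<longleftrightarrow> cox_eq n u v"
proof
  assume "cox_rep n u = cox_rep n v"
  then show "cox_eq n u v"
    using cox_rep_cox_eq[OF assms(1)] cox_rep_cox_eq[OF assms(2)]
    by (metis cox_eq.cox_sym cox_eq.cox_trans)
next
  assume "cox_eq n u v"
  then have "(\<lambda>w. cox_eq n w u) = (\<lambda>w. cox_eq n w v)"
    by (auto intro: cox_eq.cox_trans cox_eq.cox_sym)
  then show "cox_rep n u = cox_rep n v"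
    unfolding cox_rep_def by simp
qed

lemma univ_flag_eq_iff:
  "u \<in> words n \<Longrightarrow> v \<in> words n \<Longrightarrow> univ_flag n u = univ_flag n v \<longleftrightarrow> cox_eq n u v"
  by (simp add: univ_flag_def cox_rep_eq_iff)

lemma univ_adj_univ_flag:
  assumes "i < n" "w \<in> words n"
  shows "univ_adj n i (univ_flag n w) = univ_flag n (i # w)"
proof -
  have "cox_eq n ([i] @ cox_rep n w) ([i] @ w)"
    using assms by (intro cox_eq_append_left cox_rep_cox_eq) simp_all
  moreover have "cox_rep n w \<in> words n"
    using cox_eq_words[OF cox_rep_cox_eq[OF assms(2)]] by simp
  ultimately have "univ_flag n (i # cox_rep n w) = univ_flag n (i # w)"
    using assms by (simp add: univ_flag_eq_iff)
  then show ?thesis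
    by (simp add: univ_adj_def univ_flag_def)
qed

lemma act_univ_adj:
  "w \<in> words n \<Longrightarrow> v \<in> words n \<Longrightarrow> act (univ_adj n) v (univ_flag n w) = univ_flag n (v @ w)"
  by (induction v) (simp_all add: univ_adj_univ_flag)

lemma premaniplex_univ: "premaniplex n (univ_flags n) (univ_adj n)"
  unfolding premaniplex_def
proof (intro conjI allI impI ballI)
  fix i k assume i: "i < n" and "k \<in> univ_flags n"
  then obtain w where w: "w \<in> words n" and k: "k = univ_flag n w"
    by (auto simp: univ_flags_def)
  show "univ_adj n i k \<in> univ_flags n"
    using i w by (simp add: k univ_adj_univ_flag univ_flags_def)
  have "cox_eq n ([] @ [i, i] @ w) ([] @ w)"
    using i w by (intro cox_eq.cox_del2) (simp_all add: words_def)
  then show "univ_adj n i (univ_adj n i k) = k"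
    using i w by (simp add: k univ_adj_univ_flag univ_flag_eq_iff)
next
  fix i j k assume i: "i < n" and j: "j < n" and ij: "i + 2 \<le> j \<or> j + 2 \<le> i"
    and "k \<in> univ_flags n"
  then obtain w where w: "w \<in> words n" and k: "k = univ_flag n w"
    by (auto simp: univ_flags_def)
  have "cox_eq n ([] @ [j, i, j, i] @ w) ([] @ w)"
    using i j ij w by (intro cox_eq.cox_del4) (auto simp: words_def)
  then show "univ_adj n j (univ_adj n i (univ_adj n j (univ_adj n i k))) = k"
    using i j w by (simp add: k univ_adj_univ_flag univ_flag_eq_iff)
qed

lemma connected_univ: "connected_pm n (univ_flags n) (univ_adj n)"
  unfolding connected_pm_def
proof (intro ballI)
  fix k k' assume "k \<in> univ_flags n" "k' \<in> univ_flags n"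
  then obtain w w' where w: "w \<in> words n" "w' \<in> words n"
    and k: "k = univ_flag n w" "k' = univ_flag n w'"
    by (auto simp: univ_flags_def)
  have "cox_eq n (w' @ rev w @ w) (w' @ [])"
    using w by (intro cox_eq_append_left cox_eq_rev_append)
  then have "act (univ_adj n) (w' @ rev w) k = k'"
    using w by (simp add: k act_univ_adj univ_flag_eq_iff)
  then show "\<exists>v\<in>words n. act (univ_adj n) v k = k'"
    using w by (metis words_append words_rev)
qed

lemma preserves_connectivity_path_with_voltage:
  assumes V: "voltage n m FY adjY eta" and pres: "preserves_connectivity n m FY adjY eta"
    and y0: "y0 \<in> FY" and y: "y \<in> FY" and g: "g \<in> words n"
  obtains \<omega> where "\<omega> \<in> words m" "act adjY \<omega> y0 = y" "cox_eq n (eta y0 \<omega>) g"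
proof -
  have "connected_pm m (univ_flags n \<times> FY) (prod_adj (univ_adj n) adjY eta)"
    using pres premaniplex_univ connected_univ unfolding preserves_connectivity_def by blast
  moreover have "(univ_flag n [], y0) \<in> univ_flags n \<times> FY" "(univ_flag n g, y) \<in> univ_flags n \<times> FY"
    using y0 y g by (auto simp: univ_flags_def)
  ultimately obtain \<omega> where \<omega>: "\<omega> \<in> words m"
    and "act (prod_adj (univ_adj n) adjY eta) \<omega> (univ_flag n [], y0) = (univ_flag n g, y)"
    unfolding connected_pm_def by blast
  moreover have "univ_flag n [] \<in> univ_flags n"
    by (simp add: univ_flags_def)
  ultimately have "univ_flag n (eta y0 \<omega>) = univ_flag n g" "act adjY \<omega> y0 = y"
    using act_prod_adj[OF premaniplex_univ V _ y0 \<omega>] act_univ_adj voltage_in_words[OF V y0 \<omega>]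
    by simp_all
  then show ?thesis
    using that \<omega> g voltage_in_words[OF V y0 \<omega>] by (simp add: univ_flag_eq_iff)
qed

lemma quot_adj_coset:
  assumes i: "i < n" and w: "w \<in> words n" and K: "K \<subseteq> words n"
  shows "quot_adj n i (coset n K w) = coset n K (i # w)"
proof
  show "quot_adj n i (coset n K w) \<subseteq> coset n K (i # w)"
  proof
    fix v assume "v \<in> quot_adj n i (coset n K w)"
    then obtain u k where v: "v \<in> words n" and vu: "cox_eq n v ([i] @ u)" and k: "k \<in> K"
      and uk: "cox_eq n u (w @ k)"
      unfolding quot_adj_def coset_def by auto
    have "cox_eq n ([i] @ u) ([i] @ w @ k)"
      using i by (intro cox_eq_append_left uk) simp
    with vu have "cox_eq n v ((i # w) @ k)"
      by (auto intro: cox_eq.cox_trans)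
    with v k show "v \<in> coset n K (i # w)"
      unfolding coset_def by blast
  qed
next
  show "coset n K (i # w) \<subseteq> quot_adj n i (coset n K w)"
  proof
    fix v assume "v \<in> coset n K (i # w)"
    then obtain k where v: "v \<in> words n" and k: "k \<in> K" and vk: "cox_eq n v (i # w @ k)"
      unfolding coset_def by auto
    have "w @ k \<in> coset n K w"
      using w k K cox_eq_refl[of "w @ k" n] unfolding coset_def by auto
    with v vk show "v \<in> quot_adj n i (coset n K w)"
      unfolding quot_adj_def by auto
  qed
qed

lemma coset_eq_if_act_eq:
  assumes X: "premaniplex n FX adjX" and x: "x \<in> FX" and K: "K \<subseteq> words n"
    and K_mult: "\<And>a b. a \<in> K \<Longrightarrow> b \<in> K \<Longrightarrow> \<exists>c\<in>K. cox_eq n (a @ b) c"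
    and K_stab: "\<And>s. s \<in> stab n adjX x \<Longrightarrow> \<exists>k\<in>K. cox_eq n s k"
    and w: "w \<in> words n" and w': "w' \<in> words n" and eq: "act adjX w x = act adjX w' x"
  shows "coset n K w = coset n K w'"
proof -
  have "coset n K u \<subseteq> coset n K u'"
    if u: "u \<in> words n" and u': "u' \<in> words n" and eq: "act adjX u x = act adjX u' x" for u u'
  proof
    fix v assume "v \<in> coset n K u"
    then obtain k where v: "v \<in> words n" and k: "k \<in> K" and vk: "cox_eq n v (u @ k)"
      unfolding coset_def by blast
    have "rev u' @ u \<in> stab n adjX x"
      using u u' eq premaniplex_act_rev_act[OF X x u'] by (simp add: stab_def act_append)
    then obtain k1 where k1: "k1 \<in> K" and uk1: "cox_eq n (rev u' @ u) k1"
      using K_stab by blast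
    obtain c where c: "c \<in> K" and kc: "cox_eq n (k1 @ k) c"
      using K_mult[OF k1 k] by blast
    have k_words: "k \<in> words n" using k K by auto
    have cancel: "cox_eq n (u' @ rev u' @ u @ k) (u @ k)"
      using cox_eq_append_right[OF cox_eq_append_rev[OF u'], of "u @ k"] u k_words by simp
    have "cox_eq n (u' @ rev u' @ u @ k) (u' @ k1 @ k)"
      using cox_eq_append_cong[OF uk1 u' k_words] by simp
    also have "cox_eq n (u' @ k1 @ k) (u' @ c)"
      using kc u' by (rule cox_eq_append_left)
    finally have "cox_eq n (u @ k) (u' @ c)"
      by (rule cox_eq.cox_trans[OF cox_eq.cox_sym[OF cancel]])
    with vk have "cox_eq n v (u' @ c)"
      by (rule cox_eq.cox_trans)
    with v c show "v \<in> coset n K u'"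
      unfolding coset_def by blast
  qed
  from this[OF w w' eq] this[OF w' w eq [symmetric]] show ?thesis
    by (rule subset_antisym)
qed

text \<open>The covering sends \<open>w x\<close> to the coset \<open>w K\<close>.\<close>

lemma covers_quot:
  assumes X: "premaniplex n FX adjX" and X_connected: "connected_pm n FX adjX" and x: "x \<in> FX"
    and K: "K \<subseteq> words n"
    and K_mult: "\<And>a b. a \<in> K \<Longrightarrow> b \<in> K \<Longrightarrow> \<exists>c\<in>K. cox_eq n (a @ b) c"
    and K_stab: "\<And>s. s \<in> stab n adjX x \<Longrightarrow> \<exists>k\<in>K. cox_eq n s k"
  shows "covers n FX adjX (quot_flags n K) (quot_adj n)"
proof -
  note coset_eq = coset_eq_if_act_eq[OF X x K K_mult K_stab]
  define r where "r z = (SOME w. w \<in> words n \<and> act adjX w x = z)" for z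
  have r: "r z \<in> words n \<and> act adjX (r z) x = z" if "z \<in> FX" for z
    unfolding r_def
    by (rule someI_ex) (use X_connected x that in \<open>auto simp: connected_pm_def\<close>)
  define f where "f z = coset n K (r z)" for z
  have "f ` FX = quot_flags n K"
  proof
    show "f ` FX \<subseteq> quot_flags n K"
      using r unfolding f_def quot_flags_def by auto
  next
    show "quot_flags n K \<subseteq> f ` FX"
    proof
      fix C assume "C \<in> quot_flags n K"
      then obtain w where w: "w \<in> words n" and C: "C = coset n K w"
        unfolding quot_flags_def by auto
      have z: "act adjX w x \<in> FX"
        using premaniplex_act_in_flags[OF X x w] .
      then have "f (act adjX w x) = C"
        unfolding f_def C using r[OF z] w by (intro coset_eq) simp_all
      with z show "C \<in> f ` FX" by blast
    qed
  qed
  moreover have "f (adjX i z) = quot_adj n i (f z)" if i: "i < n" and z: "z \<in> FX" for i z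
  proof -
    have "adjX i z \<in> FX"
      using premaniplex_adj_in_flags[OF X i z] .
    then have "f (adjX i z) = coset n K (i # r z)"
      unfolding f_def using r[OF z] i by (intro coset_eq) (simp_all add: r)
    also have "\<dots> = quot_adj n i (f z)"
      unfolding f_def using quot_adj_coset[OF i _ K] r[OF z] by simp
    finally show ?thesis .
  qed
  ultimately show ?thesis
    unfolding covers_def by blast
qed

locale product_automorphism =
  fixes n m :: nat
    and FX :: "'a set" and adjX :: "nat \<Rightarrow> 'a \<Rightarrow> 'a"
    and FY :: "'b set" and adjY :: "nat \<Rightarrow> 'b \<Rightarrow> 'b"
    and eta :: "'b \<Rightarrow> word \<Rightarrow> word" and \<gamma> :: "'a \<times> 'b \<Rightarrow> 'a \<times> 'b"
  assumes X: "premaniplex n FX adjX" and X_connected: "connected_pm n FX adjX"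
    and Y: "premaniplex m FY adjY" and V: "voltage n m FY adjY eta"
    and pres: "preserves_connectivity n m FY adjY eta"
    and aut: "automorphism m (FX \<times> FY) (prod_adj adjX adjY eta) \<gamma>"
begin

lemma \<gamma>_in_flags: "p \<in> FX \<times> FY \<Longrightarrow> \<gamma> p \<in> FX \<times> FY"
  using aut by (auto simp: automorphism_def bij_betw_def)

lemma \<gamma>_act:
  assumes x: "x \<in> FX" and y: "y \<in> FY" and \<omega>: "\<omega> \<in> words m" and \<gamma>xy: "\<gamma> (x, y) = (x', y')"
  shows "\<gamma> (act adjX (eta y \<omega>) x, act adjY \<omega> y) = (act adjX (eta y' \<omega>) x', act adjY \<omega> y')"
proof -
  have "x' \<in> FX" "y' \<in> FY"
    using \<gamma>_in_flags[of "(x, y)"] x y \<gamma>xy by auto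
  moreover have "\<gamma> (act (prod_adj adjX adjY eta) \<omega> (x, y)) = act (prod_adj adjX adjY eta) \<omega> (x', y')"
    using automorphism_act[OF prod_adj_in_flags[OF X Y V] aut _ \<omega>] x y \<gamma>xy by simp
  ultimately show ?thesis
    using x y \<omega> by (simp add: act_prod_adj[OF X V])
qed

lemma covers_quot_common_stab:
  assumes x: "x \<in> FX" and y0: "y0 \<in> FY" and \<gamma>x: "\<gamma> (x, y0) = (x', y1)"
  shows "covers n FX adjX (quot_flags n (eta y0 ` (stab m adjY y0 \<inter> stab m adjY y1))) (quot_adj n)"
proof (rule covers_quot[OF X X_connected x])
  show "eta y0 ` (stab m adjY y0 \<inter> stab m adjY y1) \<subseteq> words n"
    using voltage_in_words[OF V y0] by (auto simp: stab_def)
next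
  fix a b
  assume "a \<in> eta y0 ` (stab m adjY y0 \<inter> stab m adjY y1)"
    and "b \<in> eta y0 ` (stab m adjY y0 \<inter> stab m adjY y1)"
  then obtain l l' where l: "l \<in> stab m adjY y0 \<inter> stab m adjY y1" "a = eta y0 l"
    and l': "l' \<in> stab m adjY y0 \<inter> stab m adjY y1" "b = eta y0 l'"
    by blast
  then have "cox_eq n (a @ b) (eta y0 (l @ l'))"
    using voltage_stab_append[OF V y0] by simp
  moreover have "l @ l' \<in> stab m adjY y0 \<inter> stab m adjY y1"
    using l l' by (simp add: stab_append)
  ultimately show "\<exists>c\<in>eta y0 ` (stab m adjY y0 \<inter> stab m adjY y1). cox_eq n (a @ b) c"
    by blast
next
  fix s assume "s \<in> stab n adjX x"
  then have s: "s \<in> words n" and sx: "act adjX s x = x"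
    by (simp_all add: stab_def)
  obtain l where l: "l \<in> words m" "act adjY l y0 = y0" and ls: "cox_eq n (eta y0 l) s"
    using preserves_connectivity_path_with_voltage[OF V pres y0 y0 s] .
  have "act adjX (eta y0 l) x = x"
    using premaniplex_act_cox_eq[OF ls X x] sx by simp
  then have "(x', y1) = (act adjX (eta y1 l) x', act adjY l y1)"
    using \<gamma>_act[OF x y0 l(1) \<gamma>x] l(2) \<gamma>x by simp
  with l have "eta y0 l \<in> eta y0 ` (stab m adjY y0 \<inter> stab m adjY y1)"
    by (simp add: stab_def)
  moreover have "cox_eq n s (eta y0 l)"
    using ls by (rule cox_eq.cox_sym)
  ultimately show "\<exists>k\<in>eta y0 ` (stab m adjY y0 \<inter> stab m adjY y1). cox_eq n s k"
    by blast
qed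

end

locale fibre_preserving_automorphism = product_automorphism +
  fixes y0 :: 'b
  assumes y0: "y0 \<in> FY" and fibre: "\<And>x. x \<in> FX \<Longrightarrow> snd (\<gamma> (x, y0)) = y0"
begin

definition \<alpha> :: "'a \<Rightarrow> 'a" where
  "\<alpha> x = fst (\<gamma> (x, y0))"

lemma \<gamma>_fibre: "x \<in> FX \<Longrightarrow> \<gamma> (x, y0) = (\<alpha> x, y0)"
  by (metis \<alpha>_def fibre prod.collapse)

lemma \<alpha>_in_flags: "x \<in> FX \<Longrightarrow> \<alpha> x \<in> FX"
  using \<gamma>_in_flags[of "(x, y0)"] y0 by (simp add: \<gamma>_fibre)

lemma \<alpha>_act:
  assumes x: "x \<in> FX" and w: "w \<in> words n"
  shows "\<alpha> (act adjX w x) = act adjX w (\<alpha> x)"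
proof -
  obtain l where l: "l \<in> words m" "act adjY l y0 = y0" and lw: "cox_eq n (eta y0 l) w"
    using preserves_connectivity_path_with_voltage[OF V pres y0 y0 w] .
  have "\<gamma> (act adjX (eta y0 l) x, y0) = (act adjX (eta y0 l) (\<alpha> x), y0)"
    using \<gamma>_act[OF x y0 l(1) \<gamma>_fibre[OF x]] l(2) by simp
  then have "\<gamma> (act adjX w x, y0) = (act adjX w (\<alpha> x), y0)"
    using premaniplex_act_cox_eq[OF lw X] x \<alpha>_in_flags by simp
  then show ?thesis
    using \<gamma>_fibre premaniplex_act_in_flags[OF X x w] by simp
qed

lemma automorphism_\<alpha>: "automorphism n FX adjX \<alpha>"
  unfolding automorphism_def bij_betw_def
proof (intro conjI allI impI ballI)
  show "inj_on \<alpha> FX"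
  proof (rule inj_onI)
    fix a b assume a: "a \<in> FX" and b: "b \<in> FX" and "\<alpha> a = \<alpha> b"
    then have "\<gamma> (a, y0) = \<gamma> (b, y0)"
      by (simp add: \<gamma>_fibre)
    moreover have "inj_on \<gamma> (FX \<times> FY)"
      using aut by (simp add: automorphism_def bij_betw_def)
    ultimately show "a = b"
      using a b y0 by (auto dest: inj_onD)
  qed
  show "\<alpha> ` FX = FX"
  proof
    show "\<alpha> ` FX \<subseteq> FX"
      using \<alpha>_in_flags by blast
  next
    show "FX \<subseteq> \<alpha> ` FX"
    proof
      fix z assume z: "z \<in> FX"
      then obtain w where w: "w \<in> words n" and "act adjX w (\<alpha> z) = z"
        using X_connected \<alpha>_in_flags[OF z] unfolding connected_pm_def by blast
      then have "\<alpha> (act adjX w z) = z"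
        using \<alpha>_act[OF z w] by simp
      moreover have "act adjX w z \<in> FX"
        using premaniplex_act_in_flags[OF X z w] .
      ultimately show "z \<in> \<alpha> ` FX"
        by (metis image_eqI)
    qed
  qed
next
  fix i x assume "i < n" "x \<in> FX"
  then show "\<alpha> (adjX i x) = adjX i (\<alpha> x)"
    using \<alpha>_act[of x "[i]"] by simp
qed

lemma \<gamma>_eq_\<alpha>:
  assumes x: "x \<in> FX" and y: "y \<in> FY"
  shows "\<gamma> (x, y) = (\<alpha> x, y)"
proof -
  obtain \<upsilon> where \<upsilon>: "\<upsilon> \<in> words m" "act adjY \<upsilon> y0 = y"
    using preserves_connectivity_path_with_voltage[OF V pres y0 y words_Nil] by blast
  define g where "g = eta y0 \<upsilon>"
  have g: "g \<in> words n"
    unfolding g_def using voltage_in_words[OF V y0 \<upsilon>(1)] .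
  define x' where "x' = act adjX (rev g) x"
  have x': "x' \<in> FX" and x'_g: "act adjX g x' = x"
    unfolding x'_def using g x premaniplex_act_in_flags[OF X] premaniplex_act_act_rev[OF X]
    by simp_all
  have "\<gamma> (x, y) = \<gamma> (act adjX (eta y0 \<upsilon>) x', act adjY \<upsilon> y0)"
    using x'_g \<upsilon>(2) by (simp add: g_def)
  also have "\<dots> = (act adjX g (\<alpha> x'), y)"
    using \<gamma>_act[OF x' y0 \<upsilon>(1) \<gamma>_fibre[OF x']] \<upsilon>(2) by (simp add: g_def)
  also have "\<dots> = (\<alpha> x, y)"
    using \<alpha>_act[OF x' g] x'_g by simp
  finally show ?thesis .
qed

end

theorem theorem5p7:
  fixes n m :: nat
    and FX :: "'a set" and adjX :: "nat \<Rightarrow> 'a \<Rightarrow> 'a" and x0 :: 'a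
    and FY :: "'b set" and adjY :: "nat \<Rightarrow> 'b \<Rightarrow> 'b" and y0 :: 'b
    and eta :: "'b \<Rightarrow> word \<Rightarrow> word"
    and L :: "word set" and \<zeta> :: "word \<Rightarrow> word"
  assumes X: "premaniplex n FX adjX" and Xconn: "connected_pm n FX adjX" and x0: "x0 \<in> FX"
    and Y: "voltage_operator n m FY adjY eta"
    and conv: "trivial_tree_convention n m FY adjY eta"
    and pres: "preserves_connectivity n m FY adjY eta"
    and y0: "y0 \<in> FY"
    and L_def: "L = stab m adjY y0"
    and zeta_def: "\<zeta> = eta y0"
    and nocover: "\<forall>\<upsilon>\<in>words m - L.
       \<not> covers n FX adjX
           (quot_flags n (\<zeta> ` {w \<in> L. \<upsilon> @ w @ rev \<upsilon> \<in> L}))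
           (quot_adj n)"
  shows "\<forall>\<gamma>. automorphism m (FX \<times> FY) (prod_adj adjX adjY eta) \<gamma> \<longrightarrow>
           (\<exists>\<alpha>. automorphism n FX adjX \<alpha> \<and>
              (\<forall>x\<in>FX. \<forall>y\<in>FY. \<gamma> (x, y) = (\<alpha> x, y)))"
proof (intro allI impI)
  \<comment> \<open>Neither the base flag \<open>x0\<close> nor the spanning-tree convention \<open>conv\<close> is needed.\<close>
  fix \<gamma> assume \<gamma>: "automorphism m (FX \<times> FY) (prod_adj adjX adjY eta) \<gamma>"
  have Y': "premaniplex m FY adjY" and V: "voltage n m FY adjY eta"
    using Y by (simp_all add: voltage_operator_def)
  interpret product_automorphism n m FX adjX FY adjY eta \<gamma>
    using X Xconn Y' V pres \<gamma> by unfold_locales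
  have "snd (\<gamma> (x, y0)) = y0" if x: "x \<in> FX" for x
  proof (rule ccontr)
    assume moved: "snd (\<gamma> (x, y0)) \<noteq> y0"
    obtain x' y1 where \<gamma>x: "\<gamma> (x, y0) = (x', y1)" and y1: "y1 \<in> FY"
      using \<gamma>_in_flags[of "(x, y0)"] x y0 by force
    obtain \<upsilon> where \<upsilon>: "\<upsilon> \<in> words m" "act adjY \<upsilon> y0 = y1"
      using preserves_connectivity_path_with_voltage[OF V pres y0 y1 words_Nil] by blast
    have "rev \<upsilon> \<in> words m - L"
      using rev_mem_stab_iff[OF Y' y0 \<upsilon>(1)] \<upsilon> moved \<gamma>x by (simp add: L_def)
    then have "\<not> covers n FX adjX (quot_flags n (\<zeta> ` {w \<in> L. rev \<upsilon> @ w @ rev (rev \<upsilon>) \<in> L}))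
        (quot_adj n)"
      using nocover by blast
    moreover have "{w \<in> L. rev \<upsilon> @ w @ rev (rev \<upsilon>) \<in> L} = stab m adjY y0 \<inter> stab m adjY y1"
      using conj_mem_stab_iff[OF Y' y0 \<upsilon>(1)] \<upsilon>(2) by (auto simp: L_def stab_def)
    ultimately show False
      using covers_quot_common_stab[OF x y0 \<gamma>x] by (simp add: zeta_def)
  qed
  then interpret fibre_preserving_automorphism n m FX adjX FY adjY eta \<gamma> y0
    using y0 by unfold_locales
  show "\<exists>\<alpha>. automorphism n FX adjX \<alpha> \<and> (\<forall>x\<in>FX. \<forall>y\<in>FY. \<gamma> (x, y) = (\<alpha> x, y))"
    using automorphism_\<alpha> \<gamma>_eq_\<alpha> by blast
qed

end
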